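(* For $\theta>0$ and an integer $n\ge1$, let $K_n(\theta)$ be a random variable with $P\{K_n(\theta)=k\}=|S_n^k|\theta^k/\theta_{(n)}$, $k=1,\dots,n$, where $\theta_{(n)}=\theta(\theta+1)\cdots(\theta+n-1)$ and $|S_n^k|$ is the coefficient of $\theta^k$ in $\theta_{(n)}$. Then, as $\theta\to\infty$, in probability: (Case A, $n$ fixed) $K_n(\theta)\to n$; (Case B, $n=n(\theta)\to\infty$, $\theta/n\to\infty$) $K_n(\theta)/n\to1$; (Case C, $n=n(\theta)\to\infty$, $\theta/n\to c\in(0,\infty)$) $K_n(\theta)/n\to\log\big(1+\frac1c\big)^c$; (Case D, $n=n(\theta)\to\infty$, $\theta/n\to0$) $K_n(\theta)/(\theta\log(n/\theta))\to1$.
   Context: $K_n(\theta)$ is the number of distinct alleles in a sample of size $n$ from a $PD(\theta)$ population. *)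

theory Defs
  imports "HOL-Analysis.Analysis" "HOL-Combinatorics.Stirling"
begin

definition K_pmf :: "nat \<Rightarrow> real \<Rightarrow> nat \<Rightarrow> real" where
  "K_pmf n \<theta> k = (if 1 \<le> k \<and> k \<le> n
     then real (stirling n k) * \<theta> ^ k / pochhammer \<theta> n else 0)"

definition K_prob :: "nat \<Rightarrow> real \<Rightarrow> nat set \<Rightarrow> real" where
  "K_prob n \<theta> A = (\<Sum>k\<in>{1..n} \<inter> A. K_pmf n \<theta> k)"

end

theory Submission imports Defs "HOL-Real_Asymp.Real_Asymp" begin

text \<open>K_n(\<theta>) is distributed as a sum of independent Bernoulli variables with success
  probabilities \<theta>/(\<theta>+i), i < n; this is read off the recurrence
  |S_{n+1}^k| = n |S_n^k| + |S_n^{k-1}|, and gives the mean and variance below. Chebyshev's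
  inequality reduces every case to the asymptotics of the mean, which lies within 1 of
  \<theta> ln(1 + n/\<theta>) by comparison with the integral of \<theta>/(\<theta>+x).\<close>

definition K_mean :: "nat \<Rightarrow> real \<Rightarrow> real" where
  "K_mean n \<theta> = (\<Sum>i<n. \<theta> / (\<theta> + real i))"

definition K_var :: "nat \<Rightarrow> real \<Rightarrow> real" where
  "K_var n \<theta> = (\<Sum>i<n. \<theta> * real i / (\<theta> + real i)^2)"

lemma sum_stirling_Suc:
  fixes g :: "nat \<Rightarrow> real"
  shows "(\<Sum>k\<le>Suc n. g k * real (stirling (Suc n) k) * \<theta>^k)
     = real n * (\<Sum>k\<le>n. g k * real (stirling n k) * \<theta>^k)
       + \<theta> * (\<Sum>k\<le>n. g (Suc k) * real (stirling n k) * \<theta>^k)"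
proof -
  define G where "G j = g j * real (stirling n j) * \<theta>^j" for j
  have "(\<Sum>k\<le>Suc n. g k * real (stirling (Suc n) k) * \<theta>^k)
      = (\<Sum>k\<le>n. g (Suc k) * real (stirling (Suc n) (Suc k)) * \<theta>^(Suc k))"
    by (subst sum.atMost_Suc_shift) simp
  also have "\<dots> = real n * (\<Sum>k\<le>n. G (Suc k))
                 + \<theta> * (\<Sum>k\<le>n. g (Suc k) * real (stirling n k) * \<theta>^k)"
    by (simp add: G_def sum_distrib_left sum.distrib algebra_simps)
  also have "(\<Sum>k\<le>n. G (Suc k)) = (\<Sum>k\<le>Suc n. G k) - G 0"
    by (subst sum.atMost_Suc_shift) simp
  also have "real n * \<dots> = real n * (\<Sum>k\<le>n. G k)"
    by (cases n) (simp_all add: G_def)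
  finally show ?thesis by (simp add: G_def)
qed

lemma stirling_pochhammer_mean:
  assumes "\<theta> > 0"
  shows "(\<Sum>k\<le>n. real k * real (stirling n k) * \<theta>^k) = pochhammer \<theta> n * K_mean n \<theta>"
proof (induction n)
  case 0
  show ?case by (simp add: K_mean_def)
next
  case (Suc n)
  have shift: "(\<Sum>k\<le>n. real (Suc k) * real (stirling n k) * \<theta>^k)
      = (\<Sum>k\<le>n. real k * real (stirling n k) * \<theta>^k) + pochhammer \<theta> n"
    by (simp add: algebra_simps sum.distrib flip: stirling_pochhammer)
  have "(\<Sum>k\<le>Suc n. real k * real (stirling (Suc n) k) * \<theta>^k)
      = real n * (\<Sum>k\<le>n. real k * real (stirling n k) * \<theta>^k)
        + \<theta> * ((\<Sum>k\<le>n. real k * real (stirling n k) * \<theta>^k) + pochhammer \<theta> n)"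
    by (simp only: sum_stirling_Suc shift)
  also have "\<dots> = pochhammer \<theta> (Suc n) * K_mean (Suc n) \<theta>"
    unfolding Suc.IH using assms by (simp add: pochhammer_Suc K_mean_def field_simps)
  finally show ?case .
qed

lemma stirling_pochhammer_second_moment:
  assumes "\<theta> > 0"
  shows "(\<Sum>k\<le>n. (real k)^2 * real (stirling n k) * \<theta>^k)
       = pochhammer \<theta> n * (K_var n \<theta> + (K_mean n \<theta>)^2)"
proof (induction n)
  case 0
  show ?case by (simp add: K_mean_def K_var_def)
next
  case (Suc n)
  have shift: "(\<Sum>k\<le>n. (real (Suc k))^2 * real (stirling n k) * \<theta>^k)
      = (\<Sum>k\<le>n. (real k)^2 * real (stirling n k) * \<theta>^k)
        + 2 * (\<Sum>k\<le>n. real k * real (stirling n k) * \<theta>^k) + pochhammer \<theta> n"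
    by (simp add: algebra_simps sum.distrib sum_distrib_left power2_eq_square
             flip: stirling_pochhammer)
  have "(\<Sum>k\<le>Suc n. (real k)^2 * real (stirling (Suc n) k) * \<theta>^k)
      = real n * (\<Sum>k\<le>n. (real k)^2 * real (stirling n k) * \<theta>^k)
        + \<theta> * ((\<Sum>k\<le>n. (real k)^2 * real (stirling n k) * \<theta>^k)
        + 2 * (\<Sum>k\<le>n. real k * real (stirling n k) * \<theta>^k) + pochhammer \<theta> n)"
    by (simp only: sum_stirling_Suc shift)
  also have "\<dots> = pochhammer \<theta> (Suc n) * (K_var (Suc n) \<theta> + (K_mean (Suc n) \<theta>)^2)"
  proof -
    have step: "(q - t) * (P * (V + M^2)) + t * (P * (V + M^2) + 2 * (P * M) + P)
        = P * q * ((V + t * (q - t) / q^2) + (M + t / q)^2)"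
      if "q > 0" for q t P V M :: real
      \<comment> \<open>q stands for \<theta> + n: kept abstract so that field_simps sees its square is nonzero\<close>
      using that by (simp add: field_simps power2_eq_square)
    show ?thesis
      unfolding Suc.IH stirling_pochhammer_mean[OF assms]
      using step[of "\<theta> + real n" \<theta>] assms by (simp add: pochhammer_Suc K_mean_def K_var_def)
  qed
  finally show ?case .
qed

lemma K_var_le_K_mean:
  assumes "\<theta> > 0"
  shows "K_var n \<theta> \<le> K_mean n \<theta>"
  unfolding K_var_def K_mean_def
proof (intro sum_mono)
  fix i
  have "\<theta> * real i / (\<theta> + real i)^2 = \<theta> / (\<theta> + real i) * (real i / (\<theta> + real i))"
    by (simp add: power2_eq_square)
  also have "\<dots> \<le> \<theta> / (\<theta> + real i)"
    using assms by (intro mult_left_le) auto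
  finally show "\<theta> * real i / (\<theta> + real i)^2 \<le> \<theta> / (\<theta> + real i)" .
qed

lemma K_var_nonneg: "\<theta> > 0 \<Longrightarrow> K_var n \<theta> \<ge> 0"
  unfolding K_var_def by (intro sum_nonneg) auto

lemma ln_one_plus_divide:
  fixes x \<theta> :: real
  assumes "\<theta> > 0" "\<theta> + x > 0"
  shows "ln (1 + x / \<theta>) = ln (\<theta> + x) - ln \<theta>"
proof -
  have "1 + x / \<theta> = (\<theta> + x) / \<theta>" using assms by (simp add: field_simps)
  then show ?thesis using assms by (simp add: ln_div)
qed

lemma K_mean_ge_log:
  assumes "\<theta> > 0"
  shows "\<theta> * ln (1 + real n / \<theta>) \<le> K_mean n \<theta>"
proof (induction n)
  case 0
  show ?case by (simp add: K_mean_def)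
next
  case (Suc n)
  have q: "\<theta> + real n > 0" using assms by simp
  have "ln ((\<theta> + real n + 1) / (\<theta> + real n)) \<le> (\<theta> + real n + 1) / (\<theta> + real n) - 1"
    using q by (intro ln_le_minus_one) simp
  then have "ln (\<theta> + real n + 1) - ln (\<theta> + real n) \<le> 1 / (\<theta> + real n)"
    using q by (simp add: ln_div field_simps)
  then have "\<theta> * (ln (\<theta> + real n + 1) - ln (\<theta> + real n)) \<le> \<theta> / (\<theta> + real n)"
    using mult_left_mono[OF _ less_imp_le[OF assms]] by fastforce
  then show ?case
    using Suc.IH assms by (simp add: K_mean_def ln_one_plus_divide algebra_simps)
qed

lemma K_mean_Suc_le_log:
  assumes "\<theta> > 0"
  shows "K_mean (Suc n) \<theta> \<le> 1 + \<theta> * ln (1 + real n / \<theta>)"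
proof (induction n)
  case 0
  show ?case using assms by (simp add: K_mean_def)
next
  case (Suc n)
  have q: "\<theta> + real n > 0" using assms by simp
  have "ln ((\<theta> + real n) / (\<theta> + real n + 1)) \<le> (\<theta> + real n) / (\<theta> + real n + 1) - 1"
    using q by (intro ln_le_minus_one) simp
  then have "1 / (\<theta> + real n + 1) \<le> ln (\<theta> + real n + 1) - ln (\<theta> + real n)"
    using q by (simp add: ln_div field_simps)
  then have "\<theta> / (\<theta> + real n + 1) \<le> \<theta> * (ln (\<theta> + real n + 1) - ln (\<theta> + real n))"
    using mult_left_mono[OF _ less_imp_le[OF assms]] by fastforce
  then show ?case
    using Suc.IH assms by (simp add: K_mean_def ln_one_plus_divide algebra_simps)
qed

lemma K_mean_le_log:
  assumes "\<theta> > 0"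
  shows "K_mean n \<theta> \<le> 1 + \<theta> * ln (1 + real n / \<theta>)"
proof (cases n)
  case 0
  then show ?thesis by (simp add: K_mean_def)
next
  case (Suc m)
  have "ln (1 + real m / \<theta>) \<le> ln (1 + real n / \<theta>)"
    using assms Suc by (intro ln_mono) (auto intro!: divide_right_mono add_pos_nonneg)
  then have "\<theta> * ln (1 + real m / \<theta>) \<le> \<theta> * ln (1 + real n / \<theta>)"
    by (rule mult_left_mono) (use assms in simp)
  with K_mean_Suc_le_log[OF assms, of m] Suc show ?thesis by simp
qed

lemma K_prob_nonneg: "\<theta> > 0 \<Longrightarrow> K_prob n \<theta> A \<ge> 0"
  unfolding K_prob_def K_pmf_def using pochhammer_pos[of \<theta> n]
  by (intro sum_nonneg) (auto intro!: divide_nonneg_pos)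

lemma K_prob_deviation_le:
  assumes \<theta>: "\<theta> > 0" and D: "D > 0" and \<epsilon>: "\<epsilon> > 0"
  shows "K_prob n \<theta> {k. \<epsilon> < \<bar>real k / D - L\<bar>}
       \<le> (K_var n \<theta> / D^2 + (K_mean n \<theta> / D - L)^2) / \<epsilon>^2"
proof -
  define P where "P = pochhammer \<theta> n"
  have P: "P > 0" unfolding P_def using \<theta> by (rule pochhammer_pos)
  define w where "w k = real (stirling n k) * \<theta>^k / P" for k
  have w: "w k \<ge> 0" for k using P \<theta> by (simp add: w_def)
  define A where "A = {k. \<epsilon> < \<bar>real k / D - L\<bar>}"
  have "K_prob n \<theta> A = (\<Sum>k\<in>{1..n} \<inter> A. w k)"
    unfolding K_prob_def K_pmf_def w_def P_def by (intro sum.cong) auto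
  also have "\<dots> \<le> (\<Sum>k\<in>{1..n} \<inter> A. w k * ((real k / D - L)^2 / \<epsilon>^2))"
  proof (intro sum_mono)
    fix k assume "k \<in> {1..n} \<inter> A"
    then have "\<epsilon> \<le> \<bar>real k / D - L\<bar>" by (simp add: A_def)
    then have "\<epsilon>^2 \<le> (real k / D - L)^2"
      using \<epsilon> power_mono[of \<epsilon> "\<bar>real k / D - L\<bar>" 2] by simp
    then have "1 \<le> (real k / D - L)^2 / \<epsilon>^2"
      using \<epsilon> by simp
    then show "w k \<le> w k * ((real k / D - L)^2 / \<epsilon>^2)"
      using mult_left_mono[OF _ w[of k]] by fastforce
  qed
  also have "\<dots> \<le> (\<Sum>k\<le>n. w k * ((real k / D - L)^2 / \<epsilon>^2))"
    using w by (intro sum_mono2) auto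
  also have "\<dots> = ((\<Sum>k\<le>n. (real k)^2 * real (stirling n k) * \<theta>^k)
        - 2 * (L * D) * (\<Sum>k\<le>n. real k * real (stirling n k) * \<theta>^k)
        + (L * D)^2 * (\<Sum>k\<le>n. real (stirling n k) * \<theta>^k)) / (P * D^2 * \<epsilon>^2)"
  proof -
    have "w k * ((real k / D - L)^2 / \<epsilon>^2)
        = ((real k)^2 * real (stirling n k) * \<theta>^k
           - 2 * (L * D) * (real k * real (stirling n k) * \<theta>^k)
           + (L * D)^2 * (real (stirling n k) * \<theta>^k)) / (P * D^2 * \<epsilon>^2)" for k
      using D P \<epsilon> by (simp add: w_def field_simps power2_eq_square)
    then show ?thesis
      by (simp add: sum_divide_distrib [symmetric] sum_distrib_left sum_subtractf sum.distrib)
  qed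
  also have "\<dots> = (K_var n \<theta> / D^2 + (K_mean n \<theta> / D - L)^2) / \<epsilon>^2"
    unfolding stirling_pochhammer stirling_pochhammer_mean[OF \<theta>]
      stirling_pochhammer_second_moment[OF \<theta>] P_def[symmetric]
    using P D \<epsilon> by (simp add: field_simps power2_eq_square)
  finally show ?thesis by (simp add: A_def)
qed

lemma K_prob_deviation_tendsto_0:
  fixes N :: "'a \<Rightarrow> nat" and t D :: "'a \<Rightarrow> real"
  assumes pos: "\<forall>\<^sub>F x in F. t x > 0 \<and> D x > 0"
    and mean: "((\<lambda>x. K_mean (N x) (t x) / D x) \<longlongrightarrow> L) F"
    and var: "((\<lambda>x. K_var (N x) (t x) / (D x)^2) \<longlongrightarrow> 0) F"
    and \<epsilon>: "\<epsilon> > 0"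
  shows "((\<lambda>x. K_prob (N x) (t x) {k. \<epsilon> < \<bar>real k / D x - L\<bar>}) \<longlongrightarrow> 0) F"
proof (rule tendsto_sandwich)
  show "\<forall>\<^sub>F x in F. 0 \<le> K_prob (N x) (t x) {k. \<epsilon> < \<bar>real k / D x - L\<bar>}"
    using pos by eventually_elim (simp add: K_prob_nonneg)
  show "\<forall>\<^sub>F x in F. K_prob (N x) (t x) {k. \<epsilon> < \<bar>real k / D x - L\<bar>}
          \<le> (K_var (N x) (t x) / (D x)^2 + (K_mean (N x) (t x) / D x - L)^2) / \<epsilon>^2"
    using pos by eventually_elim (simp add: K_prob_deviation_le \<epsilon>)
  have "((\<lambda>x. (K_var (N x) (t x) / (D x)^2 + (K_mean (N x) (t x) / D x - L)^2) / \<epsilon>^2)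
          \<longlongrightarrow> (0 + (L - L)^2) / \<epsilon>^2) F"
    by (intro tendsto_intros mean var) (use \<epsilon> in auto)
  then show "((\<lambda>x. (K_var (N x) (t x) / (D x)^2 + (K_mean (N x) (t x) / D x - L)^2) / \<epsilon>^2)
          \<longlongrightarrow> 0) F"
    by simp
qed (rule tendsto_const)

lemma K_prob_deviation_tendsto_0_log:
  fixes N :: "'a \<Rightarrow> nat" and t D :: "'a \<Rightarrow> real"
  assumes t: "\<forall>\<^sub>F x in F. t x > 0"
    and D: "filterlim D at_top F"
    and L: "((\<lambda>x. t x * ln (1 + real (N x) / t x) / D x) \<longlongrightarrow> L) F"
    and \<epsilon>: "\<epsilon> > 0"
  shows "((\<lambda>x. K_prob (N x) (t x) {k. \<epsilon> < \<bar>real k / D x - L\<bar>}) \<longlongrightarrow> 0) F"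
proof (rule K_prob_deviation_tendsto_0[OF _ _ _ \<epsilon>])
  show pos: "\<forall>\<^sub>F x in F. t x > 0 \<and> D x > 0"
    using t filterlim_at_top_dense[THEN iffD1, OF D, rule_format, of 0] by eventually_elim auto
  have inv_D: "((\<lambda>x. 1 / D x) \<longlongrightarrow> 0) F"
    using tendsto_inverse_0_at_top[OF D] by (simp add: inverse_eq_divide)
  show mean: "((\<lambda>x. K_mean (N x) (t x) / D x) \<longlongrightarrow> L) F"
  proof (rule tendsto_sandwich[OF _ _ L])
    show "\<forall>\<^sub>F x in F. t x * ln (1 + real (N x) / t x) / D x \<le> K_mean (N x) (t x) / D x"
      using pos by eventually_elim (simp add: K_mean_ge_log divide_right_mono)
    show "\<forall>\<^sub>F x in F. K_mean (N x) (t x) / D x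
            \<le> 1 / D x + t x * ln (1 + real (N x) / t x) / D x"
      using pos
      by eventually_elim (simp add: K_mean_le_log divide_right_mono add_divide_distrib [symmetric])
    show "((\<lambda>x. 1 / D x + t x * ln (1 + real (N x) / t x) / D x) \<longlongrightarrow> L) F"
      using tendsto_add[OF inv_D L] by simp
  qed
  show "((\<lambda>x. K_var (N x) (t x) / (D x)^2) \<longlongrightarrow> 0) F"
  proof (rule tendsto_sandwich[OF _ _ tendsto_const])
    show "\<forall>\<^sub>F x in F. 0 \<le> K_var (N x) (t x) / (D x)^2"
      using pos by eventually_elim (simp add: K_var_nonneg)
    show "\<forall>\<^sub>F x in F. K_var (N x) (t x) / (D x)^2 \<le> K_mean (N x) (t x) / D x * (1 / D x)"
      using pos
      by eventually_elim (simp add: K_var_le_K_mean divide_right_mono power2_eq_square)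
    show "((\<lambda>x. K_mean (N x) (t x) / D x * (1 / D x)) \<longlongrightarrow> 0) F"
      using tendsto_mult[OF mean inv_D] by simp
  qed
qed

lemma K_concentrates_fixed_n:
  assumes "\<epsilon> > 0"
  shows "((\<lambda>\<theta>. K_prob n \<theta> {k. \<bar>real k - real n\<bar> > \<epsilon>}) \<longlongrightarrow> 0) at_top"
proof -
  have "((\<lambda>\<theta>. K_mean n \<theta>) \<longlongrightarrow> (\<Sum>i<n. 1)) at_top"
    unfolding K_mean_def by (intro tendsto_sum) real_asymp
  moreover have "((\<lambda>\<theta>. K_var n \<theta>) \<longlongrightarrow> (\<Sum>i<n. 0)) at_top"
    unfolding K_var_def by (intro tendsto_sum) real_asymp
  ultimately show ?thesis
    using K_prob_deviation_tendsto_0[of "\<lambda>\<theta>. \<theta>" "\<lambda>_. 1" at_top "\<lambda>_. n" "real n", OF _ _ _ assms]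
    by (simp add: eventually_gt_at_top)
qed

lemma K_concentrates_linear:
  assumes n: "filterlim nf at_top at_top"
    and L: "((\<lambda>\<theta>. \<theta> / real (nf \<theta>) * ln (1 + 1 / (\<theta> / real (nf \<theta>)))) \<longlongrightarrow> L) at_top"
    and \<epsilon>: "\<epsilon> > 0"
  shows "((\<lambda>\<theta>. K_prob (nf \<theta>) \<theta> {k. \<bar>real k / real (nf \<theta>) - L\<bar> > \<epsilon>}) \<longlongrightarrow> 0) at_top"
proof (rule K_prob_deviation_tendsto_0_log[OF _ _ _ \<epsilon>])
  show "\<forall>\<^sub>F \<theta> in at_top. (\<theta>::real) > 0" by (rule eventually_gt_at_top)
  show "filterlim (\<lambda>\<theta>. real (nf \<theta>)) at_top at_top"
    by (rule filterlim_compose[OF filterlim_real_sequentially n])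
  show "((\<lambda>\<theta>. \<theta> * ln (1 + real (nf \<theta>) / \<theta>) / real (nf \<theta>)) \<longlongrightarrow> L) at_top"
    using L by simp
qed

lemma K_concentrates_theta_dominant:
  assumes n: "filterlim nf at_top at_top"
    and ratio: "filterlim (\<lambda>\<theta>. \<theta> / real (nf \<theta>)) at_top at_top"
    and \<epsilon>: "\<epsilon> > 0"
  shows "((\<lambda>\<theta>. K_prob (nf \<theta>) \<theta> {k. \<bar>real k / real (nf \<theta>) - 1\<bar> > \<epsilon>}) \<longlongrightarrow> 0) at_top"
proof (rule K_concentrates_linear[OF n _ \<epsilon>])
  have "((\<lambda>y::real. y * ln (1 + 1 / y)) \<longlongrightarrow> 1) at_top" by real_asymp
  then show "((\<lambda>\<theta>. \<theta> / real (nf \<theta>) * ln (1 + 1 / (\<theta> / real (nf \<theta>)))) \<longlongrightarrow> 1) at_top"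
    by (rule filterlim_compose[OF _ ratio])
qed

lemma K_concentrates_proportional:
  assumes c: "c > 0" and n: "filterlim nf at_top at_top"
    and ratio: "((\<lambda>\<theta>. \<theta> / real (nf \<theta>)) \<longlongrightarrow> c) at_top"
    and \<epsilon>: "\<epsilon> > 0"
  shows "((\<lambda>\<theta>. K_prob (nf \<theta>) \<theta>
            {k. \<bar>real k / real (nf \<theta>) - ln ((1 + 1 / c) powr c)\<bar> > \<epsilon>}) \<longlongrightarrow> 0) at_top"
proof (rule K_concentrates_linear[OF n _ \<epsilon>])
  have "((\<lambda>\<theta>. \<theta> / real (nf \<theta>) * ln (1 + 1 / (\<theta> / real (nf \<theta>)))) \<longlongrightarrow> c * ln (1 + 1 / c)) at_top"
    using c add_pos_pos[of 1 "1 / c"] by (intro tendsto_intros ratio) auto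
  then show "((\<lambda>\<theta>. \<theta> / real (nf \<theta>) * ln (1 + 1 / (\<theta> / real (nf \<theta>))))
               \<longlongrightarrow> ln ((1 + 1 / c) powr c)) at_top"
    using c by (simp add: ln_powr add_pos_pos)
qed

lemma K_concentrates_n_dominant:
  assumes n: "filterlim nf at_top at_top"
    and ratio: "((\<lambda>\<theta>. \<theta> / real (nf \<theta>)) \<longlongrightarrow> 0) at_top"
    and \<epsilon>: "\<epsilon> > 0"
  shows "((\<lambda>\<theta>. K_prob (nf \<theta>) \<theta>
            {k. \<bar>real k / (\<theta> * ln (real (nf \<theta>) / \<theta>)) - 1\<bar> > \<epsilon>}) \<longlongrightarrow> 0) at_top"
proof (rule K_prob_deviation_tendsto_0_log[OF _ _ _ \<epsilon>])
  have pos: "\<forall>\<^sub>F \<theta> in at_top. \<theta> > 0 \<and> nf \<theta> > 0"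
    using eventually_gt_at_top[of 0] filterlim_at_top[THEN iffD1, OF n, rule_format, of 1]
    by eventually_elim auto
  then show "\<forall>\<^sub>F \<theta> in at_top. (\<theta>::real) > 0" by (rule eventually_mono) simp
  have x: "filterlim (\<lambda>\<theta>. real (nf \<theta>) / \<theta>) at_top at_top"
    using filterlim_inverse_at_top[OF ratio] pos by (simp add: eventually_mono)
  have "\<forall>\<^sub>F \<theta> in at_top. ln (real (nf \<theta>) / \<theta>) \<ge> 1"
    using filterlim_at_top[THEN iffD1, OF filterlim_compose[OF ln_at_top x], rule_format, of 1] .
  with pos have "\<forall>\<^sub>F \<theta> in at_top. \<theta> \<le> \<theta> * ln (real (nf \<theta>) / \<theta>)"
    by eventually_elim (simp add: mult_le_cancel_left1)
  then show "filterlim (\<lambda>\<theta>. \<theta> * ln (real (nf \<theta>) / \<theta>)) at_top at_top"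
    by (rule filterlim_at_top_mono[OF filterlim_ident])
  have "((\<lambda>x::real. ln (1 + x) / ln x) \<longlongrightarrow> 1) at_top" by real_asymp
  then have "((\<lambda>\<theta>. ln (1 + real (nf \<theta>) / \<theta>) / ln (real (nf \<theta>) / \<theta>)) \<longlongrightarrow> 1) at_top"
    by (rule filterlim_compose[OF _ x])
  then show "((\<lambda>\<theta>. \<theta> * ln (1 + real (nf \<theta>) / \<theta>) / (\<theta> * ln (real (nf \<theta>) / \<theta>))) \<longlongrightarrow> 1) at_top"
    by (rule Lim_transform_eventually) (use pos in \<open>eventually_elim, simp\<close>)
qed

theorem corollary4p1:
  shows
  "(\<forall>n::nat. n \<ge> 1 \<longrightarrow> (\<forall>\<epsilon>>0.
      ((\<lambda>\<theta>. K_prob n \<theta> {k. \<bar>real k - real n\<bar> > \<epsilon>}) \<longlongrightarrow> 0) at_top))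
   \<and> (\<forall>nf :: real \<Rightarrow> nat. filterlim nf at_top at_top \<longrightarrow>
        filterlim (\<lambda>\<theta>. \<theta> / real (nf \<theta>)) at_top at_top \<longrightarrow>
        (\<forall>\<epsilon>>0. ((\<lambda>\<theta>. K_prob (nf \<theta>) \<theta>
            {k. \<bar>real k / real (nf \<theta>) - 1\<bar> > \<epsilon>}) \<longlongrightarrow> 0) at_top))
   \<and> (\<forall>(nf :: real \<Rightarrow> nat) (c::real). c > 0 \<longrightarrow> filterlim nf at_top at_top \<longrightarrow>
        ((\<lambda>\<theta>. \<theta> / real (nf \<theta>)) \<longlongrightarrow> c) at_top \<longrightarrow>
        (\<forall>\<epsilon>>0. ((\<lambda>\<theta>. K_prob (nf \<theta>) \<theta>
            {k. \<bar>real k / real (nf \<theta>) - ln ((1 + 1 / c) powr c)\<bar> > \<epsilon>}) \<longlongrightarrow> 0) at_top))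
   \<and> (\<forall>nf :: real \<Rightarrow> nat. filterlim nf at_top at_top \<longrightarrow>
        ((\<lambda>\<theta>. \<theta> / real (nf \<theta>)) \<longlongrightarrow> 0) at_top \<longrightarrow>
        (\<forall>\<epsilon>>0. ((\<lambda>\<theta>. K_prob (nf \<theta>) \<theta>
            {k. \<bar>real k / (\<theta> * ln (real (nf \<theta>) / \<theta>)) - 1\<bar> > \<epsilon>}) \<longlongrightarrow> 0) at_top))"
  by (intro conjI allI impI)
     (blast intro: K_concentrates_fixed_n K_concentrates_theta_dominant
                   K_concentrates_proportional K_concentrates_n_dominant)+

end
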